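(* Let $F$ be a field containing $\mathcal K$ and $w_1,\dots,w_N:\mathbb C\to F$ with $L(u)w_m(u)=0$ for all $m$ and $\xi(u)\neq0$ for all $u$. Let $\{T^{(a)}_m(u)\in F: 0\le a\le n,\ m\in\mathbb Z_{\ge0},\ u\in\mathbb C\}$ satisfy $T^{(0)}_m(u)=T^{(a)}_0(u)=1$, $T^{(n)}_m(u)\ne0$ for all $m,u$, and for all $u$ and $m\ge0$: $T^{(a)}_m(u+\frac{a+m-1}2)=(-1)^m\xi^{(a)}_m(u)/\xi(u)$ for $1\le a\le n-1$; $T^{(n)}_m(u+\frac{n+2m}2)T^{(n)}_m(u+\frac{n+2m-2}2)=\xi^{(n)}_{2m}(u)/\xi(u)$; $T^{(n)}_m(u+\frac{n+2m}2)T^{(n)}_{m+1}(u+\frac{n+2m}2)=\xi^{(n)}_{2m+1}(u)/\xi(u+1)$; $T^{(n)}_m(u+\frac{n+2m}2)^2=\xi^{(n+1)}_{2m}(u)/\xi(u)$. Then for all $u\in\mathbb C$ the $T$-system holds: \[ T^{(a)}_m(u-\tfrac12)T^{(a)}_m(u+\tfrac12)=T^{(a)}_{m+1}(u)T^{(a)}_{m-1}(u)+T^{(a-1)}_m(u)T^{(a+1)}_m(u)\quad(1\le a\le n-2,\ m\ge1), \] \[ T^{(n-1)}_{2m}(u-\tfrac12)T^{(n-1)}_{2m}(u+\tfrac12)=T^{(n-1)}_{2m+1}(u)T^{(n-1)}_{2m-1}(u)+T^{(n-2)}_{2m}(u)T^{(n)}_m(u-\tfrac12)T^{(n)}_m(u+\tfrac12)\quad(m\ge1),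 \] \[ T^{(n-1)}_{2m+1}(u-\tfrac12)T^{(n-1)}_{2m+1}(u+\tfrac12)=T^{(n-1)}_{2m+2}(u)T^{(n-1)}_{2m}(u)+T^{(n-2)}_{2m+1}(u)T^{(n)}_m(u)T^{(n)}_{m+1}(u)\quad(m\ge0), \] \[ T^{(n)}_m(u-1)T^{(n)}_m(u+1)=T^{(n)}_{m+1}(u)T^{(n)}_{m-1}(u)+T^{(n-1)}_{2m}(u)\quad(m\ge1). \]
   Context: Fix an integer $n\ge 2$ and put $N=2n+2$. Let $Q_a(u)$ ($1\le a\le n$, $u\in\mathbb C$) be algebraically independent commuting indeterminates, $\mathcal K$ the field of fractions of $\mathbb Z[Q_a(u)^{\pm1}]$. Put $d_a=1+\delta_{an}$, $Y_a(u)=Q_a(u-\frac{d_a}{2})/Q_a(u+\frac{d_a}{2})$ for $1\le a\le n$, $Y_0(u)=1$. For $1\le a\le n$ set $z_a(u)=\frac{Y_a(u+\frac a2)}{Y_{a-1}(u+\frac{a+1}2)}$, $z_{\bar a}(u)=\frac{Y_{a-1}(u+\frac{2n-a+3}2)}{Y_a(u+\frac{2n-a+4}2)}$; set $x_a(u)=z_a(u)$, $x_{2n+3-a}(u)=z_{\bar a}(u)$ for $1\le a\le n$, and $x_{n+1}(u)=-x_{n+2}(u)=\frac{Q_n(u+\frac n2)Q_n(u+\frac{n+4}2)}{Q_n(u+\frac{n+2}2)^2}$. $D$ is the shift operator ($D\,c(u)=c(u+1)D$), acting on $w:\mathbb C\to F$ by $(\sum_jc_jD^j)w(u)=\sum_jc_j(u)w(u+j)$.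 Define $L(u)=\prod_{i=1}^{N}(x_i(u+n+1-i)-D)$, factors ordered $i=1,\dots,N$ from left to right. Casorati determinants: $[i_1,\dots,i_m]$ is the function $u\mapsto\det(w_r(u+i_s))_{1\le r,s\le m}$. For $0\le a\le N$, $m\ge0$: $\xi^{(a)}_m(u)=[0,1,\dots,a-1,a+m,a+m+1,\dots,N+m-1]$ and $\xi(u)=[0,1,\dots,N-1]$. *)

theory Defs
  imports Complex_Main "Jordan_Normal_Form.Determinant"
begin

text \<open>Algebraic independence over the integers of a family q indexed by I,
  written out literally: no nonzero integer polynomial (given by its finitely
  supported coefficient function c on exponent vectors e, whose support lies in a
  finite set S of indeterminates) vanishes at q.\<close>
definition alg_indep_int :: "('i \<Rightarrow> 'f::field) \<Rightarrow> 'i set \<Rightarrow> bool" where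
  "alg_indep_int q I \<longleftrightarrow>
     (\<forall>S (c :: ('i \<Rightarrow> nat) \<Rightarrow> int).
        finite S \<and> S \<subseteq> I \<and> finite {e. c e \<noteq> 0} \<and>
        (\<forall>e. c e \<noteq> 0 \<longrightarrow> (\<forall>i. i \<notin> S \<longrightarrow> e i = 0)) \<and>
        (\<Sum>e\<in>{e. c e \<noteq> 0}. of_int (c e) * (\<Prod>i\<in>S. q i ^ e i)) = 0
        \<longrightarrow> (\<forall>e. c e = 0))"

definition dd :: "nat \<Rightarrow> nat \<Rightarrow> complex" where
  "dd n a = (if a = n then 2 else 1)"

text \<open>Y_a(u); Y_0 = 1.  q a u stands for the image of Q_a(u) in F.\<close>
definition Yf :: "(nat \<Rightarrow> complex \<Rightarrow> 'f::field) \<Rightarrow> nat \<Rightarrow> nat \<Rightarrow> complex \<Rightarrow> 'f" where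
  "Yf q n a u = (if a = 0 then 1 else q a (u - dd n a / 2) / q a (u + dd n a / 2))"

definition zf :: "(nat \<Rightarrow> complex \<Rightarrow> 'f::field) \<Rightarrow> nat \<Rightarrow> nat \<Rightarrow> complex \<Rightarrow> 'f" where
  "zf q n a u = Yf q n a (u + of_nat a / 2) / Yf q n (a - 1) (u + (of_nat a + 1) / 2)"

definition zbarf :: "(nat \<Rightarrow> complex \<Rightarrow> 'f::field) \<Rightarrow> nat \<Rightarrow> nat \<Rightarrow> complex \<Rightarrow> 'f" where
  "zbarf q n a u = Yf q n (a - 1) (u + (2 * of_nat n - of_nat a + 3) / 2)
                   / Yf q n a (u + (2 * of_nat n - of_nat a + 4) / 2)"

text \<open>x_i(u) for 1 \<le> i \<le> N = 2n+2.\<close>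
definition xf :: "(nat \<Rightarrow> complex \<Rightarrow> 'f::field) \<Rightarrow> nat \<Rightarrow> nat \<Rightarrow> complex \<Rightarrow> 'f" where
  "xf q n i u =
     (let x0 = q n (u + of_nat n / 2) * q n (u + (of_nat n + 4) / 2)
               / (q n (u + (of_nat n + 2) / 2))^2 in
      if 1 \<le> i \<and> i \<le> n then zf q n i u
      else if i = n + 1 then x0
      else if i = n + 2 then - x0
      else zbarf q n (2 * n + 3 - i) u)"

text \<open>Action of L(u) = prod_{i=1..N} (x_i(u+n+1-i) - D) (ordered left to right)
  on w : C -> F, where (c(u) - D) w (u) = c(u) w(u) - w(u+1).\<close>
definition applyL :: "(nat \<Rightarrow> complex \<Rightarrow> 'f::field) \<Rightarrow> nat \<Rightarrow> (complex \<Rightarrow> 'f) \<Rightarrow> complex \<Rightarrow> 'f" where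
  "applyL q n w = foldr (\<lambda>i f. \<lambda>u. xf q n i (u + of_nat n + 1 - of_nat i) * f u - f (u + 1))
                        [1..<2 * n + 3] w"

text \<open>Casorati determinant [idx 0, ..., idx (N-1)] of w_1..w_N.\<close>
definition casorati :: "nat \<Rightarrow> (nat \<Rightarrow> complex \<Rightarrow> 'f::field) \<Rightarrow> (nat \<Rightarrow> nat) \<Rightarrow> complex \<Rightarrow> 'f" where
  "casorati N w idx u = det (mat N N (\<lambda>(r, s). w (r + 1) (u + of_nat (idx s))))"

definition xi_am :: "nat \<Rightarrow> (nat \<Rightarrow> complex \<Rightarrow> 'f::field) \<Rightarrow> nat \<Rightarrow> nat \<Rightarrow> complex \<Rightarrow> 'f" where
  "xi_am N w a m = casorati N w (\<lambda>s. if s < a then s else s + m)"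

definition xi0 :: "nat \<Rightarrow> (nat \<Rightarrow> complex \<Rightarrow> 'f::field) \<Rightarrow> complex \<Rightarrow> 'f" where
  "xi0 N w = casorati N w (\<lambda>s. s)"

end

theory Submission
  imports Defs
begin

text \<open>The Casorati determinants xi^(a)_m(u) are maximal minors of the N x (N+2) matrix of
  values of w_1, ..., w_N at u, ..., u + a, u + a + m, ..., u + N + m, so the three-term
  Pluecker relation gives
  xi^(a)_m(u+1) xi^(a)_m(u) = xi^(a-1)_m(u+1) xi^(a+1)_m(u) + xi^(a)_(m-1)(u+1) xi^(a)_(m+1)(u).
  Since L annihilates every w_r and the product of the coefficients x_i(u+n+1-i) of L telescopes
  to -1, a discrete Abel identity gives xi(u+1) = -xi(u). After substituting the parametrisation
  of T by the Casorati determinants, the denominators of both sides of each T-system equation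
  agree up to this sign, and the equation becomes one of the Pluecker relations; for the
  equation of T^(n) one first multiplies by the nonzero factor T^(n)_m(u)^2.\<close>

section \<open>Determinants\<close>

definition det_fun :: "nat \<Rightarrow> (nat \<Rightarrow> nat \<Rightarrow> 'a::comm_ring_1) \<Rightarrow> 'a" where
  "det_fun N f = det (mat N N (\<lambda>(r, s). f r s))"

lemma det_fun_cong:
  assumes "\<And>r s. r < N \<Longrightarrow> s < N \<Longrightarrow> f r s = g r s"
  shows "det_fun N f = det_fun N g"
  unfolding det_fun_def by (rule arg_cong[where f = det], rule eq_matI) (auto simp: assms)

lemma det_fun_identical_columns:
  assumes "s1 < N" "s2 < N" "s1 \<noteq> s2" "\<And>r. r < N \<Longrightarrow> f r s1 = f r s2"
  shows "det_fun N f = 0"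
  unfolding det_fun_def
  by (rule det_identical_columns[of _ N s1 s2]) (auto simp: assms intro!: eq_vecI)

definition det_with_column :: "nat \<Rightarrow> (nat \<Rightarrow> nat \<Rightarrow> 'a::comm_ring_1) \<Rightarrow> (nat \<Rightarrow> 'a) \<Rightarrow> 'a" where
  "det_with_column M A v = det_fun (Suc M) (\<lambda>r s. if s = 0 then v r else A r (s - 1))"

lemma det_fun_insert_column:
  assumes p: "p \<le> M"
  shows "det_fun (Suc M) (\<lambda>r s. if s < p then A r s else if s = p then v r else A r (s - 1))
    = (-1) ^ p * (\<Sum>r<Suc M. (-1) ^ r * v r * det_fun M (\<lambda>r' s. A (insert_index r r') s))"
proof -
  let ?B = "mat (Suc M) (Suc M) (\<lambda>(r, s). if s < p then A r s else if s = p then v r else A r (s - 1))"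
  have "det ?B = (\<Sum>r<Suc M. ?B $$ (r, p) * cofactor ?B r p)"
    by (rule laplace_expansion_column) (use p in auto)
  also have "\<dots> = (\<Sum>r<Suc M. (-1) ^ p * ((-1) ^ r * v r * det_fun M (\<lambda>r' s. A (insert_index r r') s)))"
  proof (rule sum.cong[OF refl])
    fix r assume r: "r \<in> {..<Suc M}"
    have "mat_delete ?B r p = mat M M (\<lambda>(r', s). A (insert_index r r') s)"
      unfolding mat_delete_def insert_index_def by (rule eq_matI) (use p r in auto)
    then show "?B $$ (r, p) * cofactor ?B r p
        = (-1) ^ p * ((-1) ^ r * v r * det_fun M (\<lambda>r' s. A (insert_index r r') s))"
      using r p unfolding cofactor_def det_fun_def by (simp add: power_add ac_simps)
  qed
  finally show ?thesis unfolding det_fun_def sum_distrib_left .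
qed

lemma det_with_column_expand:
  "det_with_column M A v = (\<Sum>r<Suc M. (-1) ^ r * v r * det_fun M (\<lambda>r' s. A (insert_index r r') s))"
  using det_fun_insert_column[of 0 M A v] unfolding det_with_column_def by simp

lemma det_fun_insert_column_eq:
  assumes "p \<le> M"
  shows "det_fun (Suc M) (\<lambda>r s. if s < p then A r s else if s = p then v r else A r (s - 1))
    = (-1) ^ p * det_with_column M A v"
  using det_fun_insert_column[OF assms] unfolding det_with_column_expand .

lemma det_with_column_eq_0:
  assumes "s < M" "\<And>r. r < Suc M \<Longrightarrow> v r = A r s"
  shows "det_with_column M A v = 0"
  unfolding det_with_column_def
  by (rule det_fun_identical_columns[of 0 _ "Suc s"]) (use assms in auto)

lemma det_with_column_sum:
  "det_with_column M A (\<lambda>r. \<Sum>j\<in>J. c j * v j r) = (\<Sum>j\<in>J. c j * det_with_column M A (v j))"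
  unfolding det_with_column_expand sum_distrib_left sum_distrib_right
  by (subst sum.swap) (simp add: ac_simps)

lemma alternating_minor_sum_eq_0:
  assumes r: "r < N"
  shows "(\<Sum>k<Suc N. (-1) ^ k * U r k * det_fun N (\<lambda>r' s. U r' (insert_index k s))) = 0"
proof -
  let ?A = "mat (Suc N) (Suc N) (\<lambda>(i, j). if i = 0 then U r j else U (i - 1) j)"
  have A: "?A \<in> carrier_mat (Suc N) (Suc N)" by auto
  have "0 = det ?A"
    by (rule det_identical_rows[OF A, of 0 "Suc r", symmetric]) (use r in \<open>auto intro!: eq_vecI\<close>)
  also have "\<dots> = (\<Sum>k<Suc N. ?A $$ (0, k) * cofactor ?A 0 k)"
    by (rule laplace_expansion_row[OF A]) auto
  also have "\<dots> = (\<Sum>k<Suc N. (-1) ^ k * U r k * det_fun N (\<lambda>r' s. U r' (insert_index k s)))"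
  proof (rule sum.cong[OF refl])
    fix k assume k: "k \<in> {..<Suc N}"
    have "mat_delete ?A 0 k = mat N N (\<lambda>(r', s). U r' (insert_index k s))"
      unfolding mat_delete_def insert_index_def by (rule eq_matI) (use k in auto)
    then show "?A $$ (0, k) * cofactor ?A 0 k = (-1) ^ k * U r k * det_fun N (\<lambda>r' s. U r' (insert_index k s))"
      using k unfolding cofactor_def det_fun_def by simp
  qed
  finally show ?thesis by simp
qed

lemma alternating_minor_sum_three_terms:
  assumes ijk: "i < j" "j < k" "k < Suc N"
    and vanish: "\<And>p. p < Suc N \<Longrightarrow> p \<notin> {i, j, k} \<Longrightarrow> (\<Sum>r<N. c r * U r p) = 0"
  defines "m \<equiv> \<lambda>p. det_fun N (\<lambda>r s. U r (insert_index p s))"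
    and "\<phi> \<equiv> \<lambda>p. \<Sum>r<N. c r * U r p"
  shows "(-1) ^ i * m i * \<phi> i + (-1) ^ j * m j * \<phi> j + (-1) ^ k * m k * \<phi> k = 0"
proof -
  have "0 = (\<Sum>r<N. c r * (\<Sum>p<Suc N. (-1) ^ p * U r p * m p))"
    unfolding m_def using alternating_minor_sum_eq_0[of _ N U] by simp
  also have "\<dots> = (\<Sum>p<Suc N. (-1) ^ p * m p * \<phi> p)"
    unfolding \<phi>_def sum_distrib_left
    by (subst sum.swap) (rule sum.cong[OF refl], rule sum.cong[OF refl], simp add: ac_simps)
  also have "\<dots> = (\<Sum>p\<in>{i, j, k}. (-1) ^ p * m p * \<phi> p)"
    by (rule sum.mono_neutral_right) (use ijk vanish in \<open>auto simp: \<phi>_def\<close>)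
  also have "\<dots> = (-1) ^ i * m i * \<phi> i + (-1) ^ j * m j * \<phi> j + (-1) ^ k * m k * \<phi> k"
    using ijk by (simp add: algebra_simps)
  finally show ?thesis by simp
qed

definition skip_two :: "nat \<Rightarrow> nat \<Rightarrow> nat \<Rightarrow> nat" where
  "skip_two a b s = (if s < a then s else if Suc s < b then Suc s else Suc (Suc s))"

lemma pluecker_three_term:
  fixes V :: "nat \<Rightarrow> nat \<Rightarrow> 'a::comm_ring_1"
  assumes ijkl: "i < j" "j < k" "k < l" "l \<le> Suc (Suc M)"
  defines "D \<equiv> \<lambda>a b. det_fun (Suc M) (\<lambda>r s. V r (skip_two a b s))"
  shows "D i k * D j l = D i j * D k l + D i l * D j k"
proof -
  define skip_three where "skip_three s = (if s < i then s else if Suc s < j then Suc s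
     else if Suc (Suc s) < k then Suc (Suc s) else Suc (Suc (Suc s)))" for s
  define A where "A r s = V r (skip_three s)" for r s
  define \<phi> where "\<phi> p = det_with_column M A (\<lambda>r. V r p)" for p
  \<comment> \<open>The linear form \<phi> = det [_ | A] kills every column of V except i, j, k; applied to
    the linear relation among the columns of V without column l it leaves three terms.\<close>
  have insert_column: "det_fun (Suc M) (\<lambda>r s. if s < t then A r s else if s = t then V r p else A r (s - 1))
      = (-1) ^ t * \<phi> p" if "t \<le> M" for t p
    unfolding \<phi>_def by (rule det_fun_insert_column_eq[OF that])
  obtain j' where j': "j = Suc j'"
    using ijkl(1) by (cases j) auto
  obtain k' where k': "k = Suc (Suc k')"
    using ijkl(2) j' by (cases k; cases "k - 1") auto
  have D_jk: "D j k = (-1) ^ i * \<phi> i"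
    unfolding D_def by (rule trans[OF det_fun_cong insert_column])
      (use ijkl in \<open>auto simp: A_def skip_three_def skip_two_def\<close>)
  have D_ik: "D i k = (-1) ^ j' * \<phi> j"
    unfolding D_def by (rule trans[OF det_fun_cong insert_column])
      (use ijkl j' in \<open>auto simp: A_def skip_three_def skip_two_def\<close>)
  have D_ij: "D i j = (-1) ^ k' * \<phi> k"
    unfolding D_def by (rule trans[OF det_fun_cong insert_column])
      (use ijkl k' in \<open>auto simp: A_def skip_three_def skip_two_def\<close>)
  have \<phi>_0: "\<phi> p = 0" if p: "p \<le> Suc (Suc M)" "p \<notin> {i, j, k}" for p
  proof -
    define s where "s = (if p < i then p else if p < j then p - 1 else if p < k then p - 2 else p - 3)"
    have "s < M" "skip_three s = p"
      using p ijkl unfolding s_def skip_three_def by auto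
    then show ?thesis
      unfolding \<phi>_def by (intro det_with_column_eq_0[of s]) (auto simp: A_def)
  qed
  define U where "U r p = V r (if p < l then p else Suc p)" for r p
  define c where "c r = (-1) ^ r * det_fun M (\<lambda>r' s. A (insert_index r r') s)" for r
  have \<phi>_U: "(\<Sum>r<Suc M. c r * U r p) = \<phi> (if p < l then p else Suc p)" for p
    unfolding \<phi>_def det_with_column_expand c_def U_def by (simp add: ac_simps)
  have D_l: "det_fun (Suc M) (\<lambda>r s. U r (insert_index p s)) = D p l" if "p < l" for p
    unfolding D_def
    by (rule det_fun_cong) (use that in \<open>auto simp: U_def insert_index_def skip_two_def\<close>)
  have "(-1) ^ i * D i l * \<phi> i + (-1) ^ j * D j l * \<phi> j + (-1) ^ k * D k l * \<phi> k = 0"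
    using alternating_minor_sum_three_terms[of i j k "Suc M" c U] ijkl
    unfolding \<phi>_U by (auto simp: D_l \<phi>_0)
  then show ?thesis unfolding D_jk D_ik D_ij unfolding j' k'
    by (simp add: algebra_simps add_eq_0_iff2)
qed

section \<open>Casorati determinants\<close>

lemma casorati_eq_det_fun: "casorati N w idx u = det_fun N (\<lambda>r s. w (r + 1) (u + of_nat (idx s)))"
  unfolding casorati_def det_fun_def by simp

lemma casorati_shift:
  assumes "\<And>s. s < N \<Longrightarrow> idx' s = idx s + k"
  shows "casorati N w idx' u = casorati N w idx (u + of_nat k)"
  unfolding casorati_eq_det_fun by (rule det_fun_cong) (simp add: assms add_ac)

lemma casorati_eq_xi_am:
  assumes "\<And>s. s < N \<Longrightarrow> idx s = (if s < a then s else s + m) + k"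
  shows "casorati N w idx u = xi_am N w a m (u + of_nat k)"
  unfolding xi_am_def by (rule casorati_shift) (use assms in simp)

lemma xi_am_0: "xi_am N w 0 m u = xi0 N w (u + of_nat m)"
  unfolding xi_am_def xi0_def by (rule casorati_shift) simp

lemma xi_am_pluecker:
  fixes w :: "nat \<Rightarrow> complex \<Rightarrow> 'f::field"
  assumes a: "1 \<le> a" "a < N" and m: "1 \<le> m"
  shows "xi_am N w a m (u + 1) * xi_am N w a m u
     = xi_am N w (a - 1) m (u + 1) * xi_am N w (a + 1) m u
       + xi_am N w a (m - 1) (u + 1) * xi_am N w a (m + 1) u"
proof -
  obtain M where N: "N = Suc M" using a by (cases N) auto
  define g where "g c = (if c \<le> a then c else c + m - 1)" for c
  define D where "D x y = det_fun (Suc M) (\<lambda>r s. w (r + 1) (u + of_nat (g (skip_two x y s))))" for x y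
  have "D 0 (a + 1) * D a (N + 1) = D 0 a * D (a + 1) (N + 1) + D 0 (N + 1) * D a (a + 1)"
    unfolding D_def by (rule pluecker_three_term) (use a N in auto)
  moreover have D_eq: "D x y = casorati N w (\<lambda>s. g (skip_two x y s)) u" for x y
    unfolding D_def casorati_eq_det_fun N ..
  moreover have "D 0 (a + 1) = xi_am N w a m (u + of_nat 1)"
    unfolding D_eq by (rule casorati_eq_xi_am) (use a m in \<open>auto simp: g_def skip_two_def\<close>)
  moreover have "D a (N + 1) = xi_am N w a m (u + of_nat 0)"
    unfolding D_eq by (rule casorati_eq_xi_am) (use a m in \<open>auto simp: g_def skip_two_def\<close>)
  moreover have "D 0 a = xi_am N w (a - 1) m (u + of_nat 1)"
    unfolding D_eq by (rule casorati_eq_xi_am) (use a m in \<open>auto simp: g_def skip_two_def\<close>)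
  moreover have "D (a + 1) (N + 1) = xi_am N w (a + 1) m (u + of_nat 0)"
    unfolding D_eq by (rule casorati_eq_xi_am) (use a m in \<open>auto simp: g_def skip_two_def\<close>)
  moreover have "D 0 (N + 1) = xi_am N w a (m - 1) (u + of_nat 1)"
    unfolding D_eq by (rule casorati_eq_xi_am) (use a m in \<open>auto simp: g_def skip_two_def\<close>)
  moreover have "D a (a + 1) = xi_am N w a (m + 1) (u + of_nat 0)"
    unfolding D_eq by (rule casorati_eq_xi_am) (use a m in \<open>auto simp: g_def skip_two_def\<close>)
  ultimately show ?thesis by (simp add: mult.commute)
qed

text \<open>Discrete analogue of Abel's identity for the Wronskian.\<close>
lemma xi0_shift_recurrence:
  fixes w :: "nat \<Rightarrow> complex \<Rightarrow> 'f::field"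
  assumes N: "N = Suc M"
    and rec: "\<And>r. r < N \<Longrightarrow> w (r + 1) (u + of_nat N) = (\<Sum>j<N. c j * w (r + 1) (u + of_nat j))"
  shows "xi0 N w (u + 1) = (-1) ^ M * c 0 * xi0 N w u"
proof -
  define A where "A r s = w (r + 1) (u + 1 + of_nat s)" for r s
  define \<phi> where "\<phi> j = det_with_column M A (\<lambda>r. w (r + 1) (u + of_nat j))" for j
  have "xi0 N w (u + 1) = det_fun (Suc M)
      (\<lambda>r s. if s < M then A r s else if s = M then w (r + 1) (u + of_nat N) else A r (s - 1))"
    unfolding xi0_def casorati_eq_det_fun N
    by (rule det_fun_cong) (auto simp: A_def add_ac less_Suc_eq)
  also have "\<dots> = (-1) ^ M * det_with_column M A (\<lambda>r. w (r + 1) (u + of_nat N))"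
    by (rule det_fun_insert_column_eq) simp
  also have "det_with_column M A (\<lambda>r. w (r + 1) (u + of_nat N))
      = det_with_column M A (\<lambda>r. \<Sum>j<N. c j * w (r + 1) (u + of_nat j))"
    unfolding det_with_column_expand N[symmetric] by (rule sum.cong[OF refl]) (simp only: lessThan_iff rec)
  also have "\<dots> = (\<Sum>j<N. c j * \<phi> j)"
    unfolding det_with_column_sum \<phi>_def ..
  also have "\<dots> = c 0 * \<phi> 0"
  proof -
    have "\<phi> (Suc j) = 0" if "j < M" for j
      unfolding \<phi>_def by (rule det_with_column_eq_0[OF that]) (simp add: A_def add_ac)
    then show ?thesis unfolding N sum.lessThan_Suc_shift by simp
  qed
  also have "\<phi> 0 = xi0 N w u"
    unfolding \<phi>_def det_with_column_def xi0_def casorati_eq_det_fun N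
    by (rule det_fun_cong) (auto simp: A_def add_ac)
  finally show ?thesis by (simp add: ac_simps)
qed

section \<open>The difference operator L\<close>

definition diff_op :: "(complex \<Rightarrow> 'a::comm_ring_1) list \<Rightarrow> (complex \<Rightarrow> 'a) \<Rightarrow> complex \<Rightarrow> 'a" where
  "diff_op gs w = foldr (\<lambda>g f u. g u * f u - f (u + 1)) gs w"

fun diff_op_coeff :: "(complex \<Rightarrow> 'a::comm_ring_1) list \<Rightarrow> nat \<Rightarrow> complex \<Rightarrow> 'a" where
  "diff_op_coeff [] j u = (if j = 0 then 1 else 0)"
| "diff_op_coeff (g # gs) j u =
     g u * diff_op_coeff gs j u - (if j = 0 then 0 else diff_op_coeff gs (j - 1) (u + 1))"

lemma diff_op_expand:
  "length gs \<le> K \<Longrightarrow> diff_op gs w u = (\<Sum>j\<le>K. diff_op_coeff gs j u * w (u + of_nat j))"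
proof (induction gs arbitrary: K u)
  case Nil
  have "(\<Sum>j\<le>K. diff_op_coeff [] j u * w (u + of_nat j))
      = (\<Sum>j\<in>{0}. diff_op_coeff [] j u * w (u + of_nat j))"
    by (rule sum.mono_neutral_right) auto
  then show ?case by (simp add: diff_op_def)
next
  case (Cons g gs)
  obtain K' where K: "K = Suc K'" and K': "length gs \<le> K'"
    using Cons.prems by (cases K) auto
  have "diff_op (g # gs) w u = g u * diff_op gs w u - diff_op gs w (u + 1)"
    by (simp add: diff_op_def)
  also have "\<dots> = g u * (\<Sum>j\<le>K. diff_op_coeff gs j u * w (u + of_nat j))
      - (\<Sum>j\<le>K'. diff_op_coeff gs j (u + 1) * w (u + 1 + of_nat j))"
    using Cons.IH[of K u] Cons.IH[OF K', of "u + 1"] K K' by simp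
  also have "(\<Sum>j\<le>K'. diff_op_coeff gs j (u + 1) * w (u + 1 + of_nat j))
     = (\<Sum>j\<le>K. (if j = 0 then 0 else diff_op_coeff gs (j - 1) (u + 1)) * w (u + of_nat j))"
    unfolding K sum.atMost_Suc_shift by (simp add: add_ac)
  finally show ?case
    by (simp add: sum_distrib_left sum_subtractf[symmetric] algebra_simps)
qed

lemma diff_op_coeff_above_length: "length gs < j \<Longrightarrow> diff_op_coeff gs j u = 0"
  by (induction gs arbitrary: j u) auto

lemma diff_op_coeff_length: "diff_op_coeff gs (length gs) u = (-1) ^ length gs"
  by (induction gs arbitrary: u) (auto simp: diff_op_coeff_above_length)

lemma diff_op_coeff_0: "diff_op_coeff gs 0 u = prod_list (map (\<lambda>g. g u) gs)"
  by (induction gs arbitrary: u) auto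

lemma xi0_shift_diff_op_kernel:
  fixes w :: "nat \<Rightarrow> complex \<Rightarrow> 'f::field"
  assumes N: "length gs = N"
    and kernel: "\<And>r u. 1 \<le> r \<Longrightarrow> r \<le> N \<Longrightarrow> diff_op gs (w r) u = 0"
  shows "xi0 N w (u + 1) = prod_list (map (\<lambda>g. g u) gs) * xi0 N w u"
proof (cases N)
  case 0
  then show ?thesis using N by (simp add: xi0_def casorati_def)
next
  case (Suc M)
  define c where "c j = - ((-1) ^ N * diff_op_coeff gs j u)" for j
  have "w (r + 1) (u + of_nat N) = (\<Sum>j<N. c j * w (r + 1) (u + of_nat j))" if "r < N" for r
  proof -
    have "0 = diff_op gs (w (r + 1)) u"
      using kernel that by simp
    also have "\<dots> = (\<Sum>j<N. diff_op_coeff gs j u * w (r + 1) (u + of_nat j))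
        + (-1) ^ N * w (r + 1) (u + of_nat N)"
      unfolding diff_op_expand[OF eq_imp_le[OF N]] using diff_op_coeff_length[of gs u]
      by (simp add: N lessThan_Suc_atMost[symmetric])
    finally have h: "(-1) ^ N * w (r + 1) (u + of_nat N)
        = - (\<Sum>j<N. diff_op_coeff gs j u * w (r + 1) (u + of_nat j))"
      by (simp add: eq_neg_iff_add_eq_0 add.commute)
    have "w (r + 1) (u + of_nat N) = (-1) ^ N * ((-1) ^ N * w (r + 1) (u + of_nat N))"
      by (simp flip: mult.assoc)
    also note h
    finally show ?thesis
      unfolding c_def by (simp add: sum_distrib_left sum_negf mult.assoc)
  qed
  then have "xi0 N w (u + 1) = (-1) ^ M * c 0 * xi0 N w u"
    by (rule xi0_shift_recurrence[OF Suc])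
  then show ?thesis by (simp add: c_def Suc diff_op_coeff_0)
qed

lemma alg_indep_int_nonzero:
  assumes indep: "alg_indep_int q I" and i: "i \<in> I"
  shows "q i \<noteq> 0"
proof
  assume "q i = 0"
  define e where "e = (\<lambda>i'. if i' = i then 1 else 0 :: nat)"
  define c where "c e' = (if e' = e then 1 else 0 :: int)" for e'
  have "{e'. c e' \<noteq> 0} = {e}" by (auto simp: c_def)
  then have "\<forall>e'. c e' = 0"
    using indep i \<open>q i = 0\<close> unfolding alg_indep_int_def
    by (elim allE[where x = "{i}"] allE[where x = c] mp) (auto simp: c_def e_def)
  then have "c e = 0" ..
  then show False by (simp add: c_def)
qed

lemma prod_zf_telescope:
  fixes q :: "nat \<Rightarrow> complex \<Rightarrow> 'f::field"
  assumes q_nz: "\<And>a x. 1 \<le> a \<Longrightarrow> a \<le> n \<Longrightarrow> q a x \<noteq> 0" and k: "k \<le> n"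
  shows "(\<Prod>i = 1..<Suc k. xf q n i (u + of_nat n + 1 - of_nat i))
    = Yf q n k (u + of_nat n + 1 - of_nat k / 2)"
  using k
proof (induction k)
  case 0
  then show ?case by (simp add: Yf_def)
next
  case (Suc k)
  define B where "B = Yf q n k (u + of_nat n + 1 - of_nat k / 2)"
  have "B \<noteq> 0" using q_nz Suc.prems by (auto simp: B_def Yf_def)
  have "(\<Prod>i = 1..<Suc (Suc k). xf q n i (u + of_nat n + 1 - of_nat i))
     = B * xf q n (Suc k) (u + of_nat n + 1 - of_nat (Suc k))"
    using Suc by (simp add: B_def prod.atLeastLessThan_Suc)
  also have "xf q n (Suc k) (u + of_nat n + 1 - of_nat (Suc k))
      = Yf q n (Suc k) (u + of_nat n + 1 - of_nat (Suc k) / 2) / B"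
    using Suc.prems by (simp add: B_def xf_def zf_def field_simps)
  finally show ?case using \<open>B \<noteq> 0\<close> by simp
qed

lemma prod_zbarf_telescope:
  fixes q :: "nat \<Rightarrow> complex \<Rightarrow> 'f::field"
  assumes q_nz: "\<And>a x. 1 \<le> a \<Longrightarrow> a \<le> n \<Longrightarrow> q a x \<noteq> 0" and k: "k \<le> n"
  shows "(\<Prod>i = 2 * n + 3 - k..<2 * n + 3. xf q n i (u + of_nat n + 1 - of_nat i))
    = 1 / Yf q n k (u + of_nat k / 2)"
  using k
proof (induction k)
  case 0
  then show ?case by (simp add: Yf_def)
next
  case (Suc k)
  define B where "B = Yf q n k (u + of_nat k / 2)"
  have "B \<noteq> 0" using q_nz Suc.prems by (auto simp: B_def Yf_def)
  have "{2 * n + 3 - Suc k..<2 * n + 3} = insert (2 * n + 2 - k) {2 * n + 3 - k..<2 * n + 3}"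
    using Suc.prems by auto
  then have "(\<Prod>i = 2 * n + 3 - Suc k..<2 * n + 3. xf q n i (u + of_nat n + 1 - of_nat i))
     = xf q n (2 * n + 2 - k) (u + of_nat n + 1 - of_nat (2 * n + 2 - k)) * (1 / B)"
    using Suc by (simp add: B_def)
  also have "xf q n (2 * n + 2 - k) (u + of_nat n + 1 - of_nat (2 * n + 2 - k))
      = B / Yf q n (Suc k) (u + of_nat (Suc k) / 2)"
  proof -
    let ?i = "2 * n + 2 - k"
    have i: "\<not> (1 \<le> ?i \<and> ?i \<le> n)" "?i \<noteq> n + 1" "?i \<noteq> n + 2" "2 * n + 3 - ?i = Suc k"
      and of_nat_i: "of_nat ?i = 2 * of_nat n + 2 - (of_nat k :: complex)"
      using Suc.prems by auto
    show ?thesis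
      unfolding xf_def Let_def if_not_P[OF i(1)] if_not_P[OF i(2)] if_not_P[OF i(3)] i(4) of_nat_i
      by (simp add: zbarf_def B_def field_simps)
  qed
  finally show ?case using \<open>B \<noteq> 0\<close> by simp
qed

lemma prod_xf_eq_minus_1:
  fixes q :: "nat \<Rightarrow> complex \<Rightarrow> 'f::field"
  assumes q_nz: "\<And>a x. 1 \<le> a \<Longrightarrow> a \<le> n \<Longrightarrow> q a x \<noteq> 0" and n: "1 \<le> n"
  shows "(\<Prod>i = 1..<2 * n + 3. xf q n i (u + of_nat n + 1 - of_nat i)) = -1"
proof -
  let ?x = "\<lambda>i. xf q n i (u + of_nat n + 1 - of_nat i)"
  define s where "s = u + of_nat n / 2"
  have "{1..<2 * n + 3} = {1..<Suc n} \<union> ({n + 1, n + 2} \<union> {2 * n + 3 - n..<2 * n + 3})"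
    by auto
  then have "prod ?x {1..<2 * n + 3}
      = prod ?x {1..<Suc n} * (?x (n + 1) * ?x (n + 2) * prod ?x {2 * n + 3 - n..<2 * n + 3})"
    by (simp add: prod.union_disjoint)
  also have "prod ?x {1..<Suc n} = Yf q n n (u + of_nat n + 1 - of_nat n / 2)"
    by (rule prod_zf_telescope[OF q_nz order.refl])
  also have "\<dots> = q n s / q n (s + 2)"
    using n by (simp add: Yf_def dd_def s_def field_simps)
  also have "prod ?x {2 * n + 3 - n..<2 * n + 3} = 1 / Yf q n n (u + of_nat n / 2)"
    by (rule prod_zbarf_telescope[OF q_nz order.refl])
  also have "\<dots> = q n (s + 1) / q n (s - 1)"
    using n by (simp add: Yf_def dd_def s_def field_simps)
  also have "?x (n + 1) = q n s * q n (s + 2) / (q n (s + 1))\<^sup>2"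
    by (simp add: xf_def s_def field_simps)
  also have "?x (n + 2) = - (q n (s - 1) * q n (s + 1) / (q n s)\<^sup>2)"
    by (simp add: xf_def s_def field_simps)
  finally show ?thesis
    using q_nz[of n] n by (simp add: field_simps power2_eq_square)
qed

lemma xi0_antiperiodic:
  fixes q :: "nat \<Rightarrow> complex \<Rightarrow> 'f::field"
  assumes q_nz: "\<And>a x. 1 \<le> a \<Longrightarrow> a \<le> n \<Longrightarrow> q a x \<noteq> 0" and n: "1 \<le> n"
    and kernel: "\<forall>m\<in>{1..2 * n + 2}. \<forall>u. applyL q n (w m) u = 0"
  shows "xi0 (2 * n + 2) w (u + 1) = - xi0 (2 * n + 2) w u"
proof -
  define gs where "gs = map (\<lambda>i u. xf q n i (u + of_nat n + 1 - of_nat i)) [1..<2 * n + 3]"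
  have "applyL q n f = diff_op gs f" for f
    unfolding applyL_def diff_op_def gs_def foldr_map o_def ..
  then have "xi0 (2 * n + 2) w (u + 1) = prod_list (map (\<lambda>g. g u) gs) * xi0 (2 * n + 2) w u"
    by (intro xi0_shift_diff_op_kernel) (use kernel in \<open>auto simp: gs_def\<close>)
  also have "prod_list (map (\<lambda>g. g u) gs) = (\<Prod>i = 1..<2 * n + 3. xf q n i (u + of_nat n + 1 - of_nat i))"
    unfolding gs_def by (simp add: o_def flip: prod.distinct_set_conv_list)
  also have "\<dots> = -1"
    by (rule prod_xf_eq_minus_1[OF q_nz n])
  finally show ?thesis by simp
qed

section \<open>The T-system\<close>

text \<open>X and Z stand for xi^(a)_m and xi; of the Casorati structure only the Pluecker
  relations and the antiperiodicity of xi are needed.\<close>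

locale T_system_parametrization =
  fixes n :: nat
    and X :: "nat \<Rightarrow> nat \<Rightarrow> complex \<Rightarrow> 'f::field"
    and Z :: "complex \<Rightarrow> 'f"
    and T :: "nat \<Rightarrow> nat \<Rightarrow> complex \<Rightarrow> 'f"
  assumes n_ge_2: "2 \<le> n"
    and Z_nonzero: "Z u \<noteq> 0"
    and Z_antiperiodic: "Z (u + 1) = - Z u"
    and X_0: "X 0 m u = Z (u + of_nat m)"
    and X_pluecker: "1 \<le> a \<Longrightarrow> a \<le> n \<Longrightarrow> 1 \<le> m \<Longrightarrow>
      X a m (u + 1) * X a m u = X (a - 1) m (u + 1) * X (a + 1) m u + X a (m - 1) (u + 1) * X a (m + 1) u"
    and T_0: "T 0 m u = 1"
    and T_n_nonzero: "T n m u \<noteq> 0"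
    and T_param: "1 \<le> a \<Longrightarrow> a \<le> n - 1 \<Longrightarrow>
      T a m (u + (of_nat a + of_nat m - 1) / 2) = (-1) ^ m * X a m u / Z u"
    and T_n_param_even: "T n m (u + (of_nat n + 2 * of_nat m) / 2) * T n m (u + (of_nat n + 2 * of_nat m - 2) / 2)
      = X n (2 * m) u / Z u"
    and T_n_param_odd: "T n m (u + (of_nat n + 2 * of_nat m) / 2) * T n (m + 1) (u + (of_nat n + 2 * of_nat m) / 2)
      = X n (2 * m + 1) u / Z (u + 1)"
    and T_n_param_square: "(T n m (u + (of_nat n + 2 * of_nat m) / 2))\<^sup>2 = X (n + 1) (2 * m) u / Z u"
begin

lemma Z_shift: "Z (u + of_nat m) = (-1) ^ m * Z u"
proof (induction m)
  case (Suc m)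
  have "Z (u + of_nat (Suc m)) = Z (u + of_nat m + 1)"
    by (simp add: add_ac)
  with Suc show ?case
    by (simp add: Z_antiperiodic)
qed simp

lemma T_eq_X:
  assumes "a \<le> n - 1" "x = u + (of_nat a + of_nat m - 1) / 2"
  shows "T a m x = (-1) ^ m * X a m u / Z u"
proof (cases "a = 0")
  case True
  then show ?thesis by (simp add: T_0 X_0 Z_shift Z_nonzero)
qed (use assms T_param in auto)

lemma T_pair_eq_X:
  assumes "a \<le> n - 1" "x = u + (of_nat a + of_nat m - 1) / 2"
    and "a' \<le> n - 1" "x' = u' + (of_nat a' + of_nat m' - 1) / 2"
    and "even (m + m')"
  shows "T a m x * T a' m' x' = X a m u * X a' m' u' / (Z u * Z u')"
proof -
  have "(-1) ^ m * (-1) ^ m' = (1 :: 'f)"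
    using \<open>even (m + m')\<close> by (simp flip: power_add)
  then show ?thesis
    using T_eq_X[OF assms(1,2)] T_eq_X[OF assms(3,4)]
    by (simp add: field_simps)
qed

lemma T_n_even_eq:
  "x = u + (of_nat n + 2 * of_nat m) / 2 \<Longrightarrow> y = u + (of_nat n + 2 * of_nat m - 2) / 2 \<Longrightarrow>
    T n m x * T n m y = X n (2 * m) u / Z u"
  using T_n_param_even by simp

lemma T_n_odd_eq:
  "x = u + (of_nat n + 2 * of_nat m) / 2 \<Longrightarrow> T n m x * T n (m + 1) x = X n (2 * m + 1) u / Z (u + 1)"
  using T_n_param_odd by simp

lemma T_n_square_eq:
  "x = u + (of_nat n + 2 * of_nat m) / 2 \<Longrightarrow> (T n m x)\<^sup>2 = X (n + 1) (2 * m) u / Z u"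
  using T_n_param_square by simp

lemma T_system_generic:
  assumes a: "1 \<le> a" "a \<le> n - 2" and m: "1 \<le> m"
  shows "T a m (v - 1/2) * T a m (v + 1/2) = T a (m + 1) v * T a (m - 1) v + T (a - 1) m v * T (a + 1) m v"
proof -
  define u where "u = v - (of_nat a + of_nat m) / 2"
  have "T a m (v - 1/2) * T a m (v + 1/2) = X a m u * X a m (u + 1) / (Z u * Z (u + 1))"
    by (rule T_pair_eq_X) (use a in \<open>auto simp: u_def field_simps\<close>)
  also have "X a m u * X a m (u + 1) = X a (m + 1) u * X a (m - 1) (u + 1) + X (a - 1) m (u + 1) * X (a + 1) m u"
    using X_pluecker[of a m u] a m by (simp add: ac_simps)
  also have "T a (m + 1) v * T a (m - 1) v = X a (m + 1) u * X a (m - 1) (u + 1) / (Z u * Z (u + 1))"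
    by (rule T_pair_eq_X) (use a m in \<open>auto simp: u_def field_simps\<close>)
  moreover have "T (a - 1) m v * T (a + 1) m v = X (a - 1) m (u + 1) * X (a + 1) m u / (Z (u + 1) * Z u)"
    by (rule T_pair_eq_X) (use a in \<open>auto simp: u_def field_simps\<close>)
  ultimately show ?thesis by (simp add: add_divide_distrib ac_simps)
qed

lemma T_system_n_minus_1_even:
  assumes m: "1 \<le> m"
  shows "T (n - 1) (2 * m) (v - 1/2) * T (n - 1) (2 * m) (v + 1/2)
    = T (n - 1) (2 * m + 1) v * T (n - 1) (2 * m - 1) v + T (n - 2) (2 * m) v * T n m (v - 1/2) * T n m (v + 1/2)"
proof -
  define u where "u = v - (of_nat n + 2 * of_nat m - 1) / 2"
  have "T (n - 1) (2 * m) (v - 1/2) * T (n - 1) (2 * m) (v + 1/2)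
      = X (n - 1) (2 * m) u * X (n - 1) (2 * m) (u + 1) / (Z u * Z (u + 1))"
    by (rule T_pair_eq_X) (use n_ge_2 in \<open>auto simp: u_def field_simps\<close>)
  also have "X (n - 1) (2 * m) u * X (n - 1) (2 * m) (u + 1)
      = X (n - 1) (2 * m + 1) u * X (n - 1) (2 * m - 1) (u + 1) + X (n - 2) (2 * m) (u + 1) * X n (2 * m) u"
    using X_pluecker[of "n - 1" "2 * m" u] n_ge_2 m by (simp add: ac_simps numeral_2_eq_2)
  also have "T (n - 1) (2 * m + 1) v * T (n - 1) (2 * m - 1) v
      = X (n - 1) (2 * m + 1) u * X (n - 1) (2 * m - 1) (u + 1) / (Z u * Z (u + 1))"
    by (rule T_pair_eq_X) (use n_ge_2 m in \<open>auto simp: u_def field_simps\<close>)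
  moreover have "T (n - 2) (2 * m) v * T n m (v - 1/2) * T n m (v + 1/2)
      = X (n - 2) (2 * m) (u + 1) * X n (2 * m) u / (Z u * Z (u + 1))"
  proof -
    have "T (n - 2) (2 * m) v = X (n - 2) (2 * m) (u + 1) / Z (u + 1)"
      by (subst T_eq_X[where u = "u + 1"]) (use n_ge_2 in \<open>auto simp: u_def field_simps\<close>)
    moreover have "T n m (v - 1/2) * T n m (v + 1/2) = X n (2 * m) u / Z u"
      by (subst mult.commute, rule T_n_even_eq) (auto simp: u_def field_simps)
    ultimately show ?thesis by (simp add: mult.assoc)
  qed
  ultimately show ?thesis by (simp add: add_divide_distrib)
qed

lemma T_system_n_minus_1_odd:
  "T (n - 1) (2 * m + 1) (v - 1/2) * T (n - 1) (2 * m + 1) (v + 1/2)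
    = T (n - 1) (2 * m + 2) v * T (n - 1) (2 * m) v + T (n - 2) (2 * m + 1) v * T n m v * T n (m + 1) v"
proof -
  define u where "u = v - (of_nat n + 2 * of_nat m) / 2"
  have "T (n - 1) (2 * m + 1) (v - 1/2) * T (n - 1) (2 * m + 1) (v + 1/2)
      = X (n - 1) (2 * m + 1) u * X (n - 1) (2 * m + 1) (u + 1) / (Z u * Z (u + 1))"
    by (rule T_pair_eq_X) (use n_ge_2 in \<open>auto simp: u_def field_simps\<close>)
  also have "X (n - 1) (2 * m + 1) u * X (n - 1) (2 * m + 1) (u + 1)
      = X (n - 1) (2 * m + 2) u * X (n - 1) (2 * m) (u + 1) + X (n - 2) (2 * m + 1) (u + 1) * X n (2 * m + 1) u"
    using X_pluecker[of "n - 1" "2 * m + 1" u] n_ge_2 by (simp add: ac_simps numeral_2_eq_2)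
  also have "T (n - 1) (2 * m + 2) v * T (n - 1) (2 * m) v
      = X (n - 1) (2 * m + 2) u * X (n - 1) (2 * m) (u + 1) / (Z u * Z (u + 1))"
    by (rule T_pair_eq_X) (use n_ge_2 in \<open>auto simp: u_def field_simps\<close>)
  moreover have "T (n - 2) (2 * m + 1) v * (T n m v * T n (m + 1) v)
      = X (n - 2) (2 * m + 1) (u + 1) * X n (2 * m + 1) u / (Z u * Z (u + 1))"
  proof -
    have "T (n - 2) (2 * m + 1) v = (-1) ^ (2 * m + 1) * X (n - 2) (2 * m + 1) (u + 1) / Z (u + 1)"
      by (rule T_eq_X) (use n_ge_2 in \<open>auto simp: u_def field_simps\<close>)
    also have "\<dots> = X (n - 2) (2 * m + 1) (u + 1) / Z u"
      by (simp add: Z_antiperiodic)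
    moreover have "T n m v * T n (m + 1) v = X n (2 * m + 1) u / Z (u + 1)"
      by (rule T_n_odd_eq) (simp add: u_def)
    ultimately show ?thesis by simp
  qed
  ultimately show ?thesis by (simp add: add_divide_distrib mult.assoc)
qed

lemma T_system_n:
  assumes m: "1 \<le> m"
  shows "T n m (t - 1) * T n m (t + 1) = T n (m + 1) t * T n (m - 1) t + T (n - 1) (2 * m) t"
proof -
  define u where "u = t - (of_nat n + 2 * of_nat m) / 2"
  obtain m' where m': "m = Suc m'"
    using m by (cases m) auto
  have Z_u: "Z u \<noteq> 0" "Z (u + 1) \<noteq> 0" "Z (u + 1 + 1) = Z u"
    by (rule Z_nonzero, rule Z_nonzero, simp only: Z_antiperiodic minus_minus)
  have "(T n m t)\<^sup>2 * (T n m (t - 1) * T n m (t + 1)) = (T n m (t + 1) * T n m t) * (T n m t * T n m (t - 1))"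
    by (simp add: power2_eq_square ac_simps)
  also have "T n m (t + 1) * T n m t = X n (2 * m) (u + 1) / Z (u + 1)"
    by (rule T_n_even_eq) (simp_all add: u_def field_simps)
  also have "T n m t * T n m (t - 1) = X n (2 * m) u / Z u"
    by (rule T_n_even_eq) (simp_all add: u_def field_simps)
  also have "X n (2 * m) (u + 1) / Z (u + 1) * (X n (2 * m) u / Z u)
      = X n (2 * m) (u + 1) * X n (2 * m) u / (Z (u + 1) * Z u)"
    by simp
  also have "X n (2 * m) (u + 1) * X n (2 * m) u
      = X n (2 * m + 1) u * X n (2 * m - 1) (u + 1) + X (n + 1) (2 * m) u * X (n - 1) (2 * m) (u + 1)"
    using X_pluecker[of n "2 * m" u] n_ge_2 m by (simp add: ac_simps)
  also have "\<dots> / (Z (u + 1) * Z u)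
      = (T n m t * T n (m + 1) t) * (T n m' t * T n (m' + 1) t) + (T n m t)\<^sup>2 * T (n - 1) (2 * m) t"
  proof -
    have odd: "T n m t * T n (m + 1) t = X n (2 * m + 1) u / Z (u + 1)"
      by (rule T_n_odd_eq) (simp add: u_def)
    have "T n m' t * T n (m' + 1) t = X n (2 * m' + 1) (u + 1) / Z (u + 1 + 1)"
      by (rule T_n_odd_eq) (simp add: u_def m' field_simps)
    then have odd': "T n m' t * T n (m' + 1) t = X n (2 * m - 1) (u + 1) / Z u"
      unfolding Z_u(3) by (simp add: m')
    have square: "(T n m t)\<^sup>2 = X (n + 1) (2 * m) u / Z u"
      by (rule T_n_square_eq) (simp add: u_def)
    have "T (n - 1) (2 * m) t = X (n - 1) (2 * m) (u + 1) / Z (u + 1)"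
      by (subst T_eq_X[where u = "u + 1"]) (use n_ge_2 in \<open>auto simp: u_def field_simps\<close>)
    then show ?thesis
      unfolding odd odd' square by (simp add: add_divide_distrib ac_simps)
  qed
  also have "\<dots> = (T n m t)\<^sup>2 * (T n (m + 1) t * T n (m - 1) t + T (n - 1) (2 * m) t)"
    by (simp add: m' power2_eq_square algebra_simps)
  finally show ?thesis
    using T_n_nonzero[of m t] by simp
qed

end

theorem mainTheorem10:
  fixes n :: nat
    and q :: "nat \<Rightarrow> complex \<Rightarrow> 'f::field"
    and w :: "nat \<Rightarrow> complex \<Rightarrow> 'f"
    and T :: "nat \<Rightarrow> nat \<Rightarrow> complex \<Rightarrow> 'f"
  assumes n2: "n \<ge> 2"
    and Kin: "alg_indep_int (\<lambda>(a, u). q a u) ({1..n} \<times> UNIV)"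
    and Lw: "\<forall>m\<in>{1..2*n+2}. \<forall>u. applyL q n (w m) u = 0"
    and xi_nz: "\<forall>u. xi0 (2*n+2) w u \<noteq> 0"
    and T0: "\<forall>m u. T 0 m u = 1"
    and Ta0: "\<forall>a\<le>n. \<forall>u. T a 0 u = 1"
    and Tn_nz: "\<forall>m u. T n m u \<noteq> 0"
    and H1: "\<forall>a u m. 1 \<le> a \<and> a \<le> n - 1 \<longrightarrow>
              T a m (u + (of_nat a + of_nat m - 1) / 2)
                = (-1) ^ m * xi_am (2*n+2) w a m u / xi0 (2*n+2) w u"
    and H2: "\<forall>u m. T n m (u + (of_nat n + 2 * of_nat m) / 2) * T n m (u + (of_nat n + 2 * of_nat m - 2) / 2)
                = xi_am (2*n+2) w n (2*m) u / xi0 (2*n+2) w u"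
    and H3: "\<forall>u m. T n m (u + (of_nat n + 2 * of_nat m) / 2) * T n (m + 1) (u + (of_nat n + 2 * of_nat m) / 2)
                = xi_am (2*n+2) w n (2*m+1) u / xi0 (2*n+2) w (u + 1)"
    and H4: "\<forall>u m. (T n m (u + (of_nat n + 2 * of_nat m) / 2))^2
                = xi_am (2*n+2) w (n+1) (2*m) u / xi0 (2*n+2) w u"
  shows "(\<forall>u a m. 1 \<le> a \<and> a \<le> n - 2 \<and> m \<ge> 1 \<longrightarrow>
            T a m (u - 1/2) * T a m (u + 1/2)
              = T a (m + 1) u * T a (m - 1) u + T (a - 1) m u * T (a + 1) m u)
       \<and> (\<forall>u m. m \<ge> 1 \<longrightarrow>
            T (n - 1) (2*m) (u - 1/2) * T (n - 1) (2*m) (u + 1/2)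
              = T (n - 1) (2*m + 1) u * T (n - 1) (2*m - 1) u
                + T (n - 2) (2*m) u * T n m (u - 1/2) * T n m (u + 1/2))
       \<and> (\<forall>u m.
            T (n - 1) (2*m + 1) (u - 1/2) * T (n - 1) (2*m + 1) (u + 1/2)
              = T (n - 1) (2*m + 2) u * T (n - 1) (2*m) u
                + T (n - 2) (2*m + 1) u * T n m u * T n (m + 1) u)
       \<and> (\<forall>u m. m \<ge> 1 \<longrightarrow>
            T n m (u - 1) * T n m (u + 1)
              = T n (m + 1) u * T n (m - 1) u + T (n - 1) (2*m) u)"
proof -
  have q_nz: "q a x \<noteq> 0" if "1 \<le> a" "a \<le> n" for a x
    using alg_indep_int_nonzero[OF Kin, of "(a, x)"] that by simp
  interpret T_system_parametrization n "xi_am (2 * n + 2) w" "xi0 (2 * n + 2) w" T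
  proof unfold_locales
    show "xi0 (2 * n + 2) w (u + 1) = - xi0 (2 * n + 2) w u" for u
      by (rule xi0_antiperiodic) (use q_nz n2 Lw in auto)
    show "xi_am (2 * n + 2) w a m (u + 1) * xi_am (2 * n + 2) w a m u
      = xi_am (2 * n + 2) w (a - 1) m (u + 1) * xi_am (2 * n + 2) w (a + 1) m u
        + xi_am (2 * n + 2) w a (m - 1) (u + 1) * xi_am (2 * n + 2) w a (m + 1) u"
      if "1 \<le> a" "a \<le> n" "1 \<le> m" for a m u
      by (rule xi_am_pluecker) (use that in auto)
  qed (use n2 xi_nz T0 Tn_nz H1 H2 H3 H4 in \<open>auto simp: xi_am_0\<close>)
  show ?thesis
    using T_system_generic T_system_n_minus_1_even T_system_n_minus_1_odd T_system_n by blast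
qed

end
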